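(* Let $G$ be a discrete group, $A$ an abelian group, $\alpha\colon G^3\to A$ a normalized 3-cocycle, $\mathcal{G}=\mathcal{G}(G,A,\alpha)$, and $X$ a smooth manifold. Let $u\colon Y\to X$ be a surjective submersion, let $\rho_1,\rho_2$ be $G$-valued Čech 1-cocycles on $Y$, let $h\colon Y\to G$ be locally constant with $\rho_2(y_1,y_2)h(y_2)=h(y_1)\rho_1(y_1,y_2)$ (so that $h$ defines an isomorphism $\varphi_{Y,h}\colon P_{u,\rho_1}\to P_{u,\rho_2}$), and let $(u,\rho_1,\gamma_1)$ be a flat $\mathcal{G}$-bundle. (1) There exist a flat $\mathcal{G}$-bundle $(u,\rho_2,{}^h\gamma_1)$ and a 1-morphism $(Y,\mathrm{id}_Y,\mathrm{id}_Y,h,\eta)\colon(u,\rho_1,\gamma_1)\to(u,\rho_2,{}^h\gamma_1)$, whose underlying $G$-bundle isomorphism is $\varphi_{Y,h}$. (2) For any such ${}^h\gamma_1$, and any flat $\mathcal{G}$-bundle $(u,\rho_2,\gamma_2)$, there exists a 1-morphism $(Y,\mathrm{id}_Y,\mathrm{id}_Y,h,\eta')\colon(u,\rho_1,\gamma_1)\to(u,\rho_2,\gamma_2)$ if and only if $\gamma_2={}^h\gamma_1\cdot d\eta''$ for some locally constant $\eta''\colon Y\times_XY\to A$; in particular then $[{}^h\gamma_1/\gamma_2]=1\in\check{H}^2(X;A)$.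
   Context: $A$ carries the discrete topology; $Y^{[k]}$ denotes the $k$-fold fiber product of $Y$ over $X$. A $G$-valued Čech 1-cocycle is a locally constant $\rho\colon Y^{[2]}\to G$ with $\rho(y_1,y_3)=\rho(y_1,y_2)\rho(y_2,y_3)$; $P_{u,\rho}=(Y\times G)/((y_1,\rho(y_1,y_2)g)\sim(y_2,g))$. The Čech differential is $dc(y_1,..,y_{k+1})=\prod_i c(y_1,..,\widehat{y_i},..,y_{k+1})^{(-1)^{i-1}}$ and $\rho^*\alpha(y_1,..,y_4)=\alpha(\rho(y_1,y_2),\rho(y_2,y_3),\rho(y_3,y_4))$. A flat $\mathcal{G}$-bundle is a triple $(u,\rho,\gamma)$ with $\gamma\colon Y^{[3]}\to A$ locally constant, $d\gamma=\rho^*\alpha$, $\gamma(y_1,y_2,y_2)=\gamma(y_2,y_2,y_3)=1$. A 1-morphism $(u_1,\rho_1,\gamma_1)\to(u_2,\rho_2,\gamma_2)$ is $(Z,v_1,v_2,h,\eta)$ with $v_i\colon Z\to Y_i$, $u_1v_1=u_2v_2$ a surjective submersion, $h\colon Z\to G$, $\eta\colon Z^{[2]}\to A$ locally constant with (pullbacks along $v_i$ implicit) $\rho_2(z_1,z_2)h(z_2)=h(z_1)\rho_1(z_1,z_2)$ and $d\eta(z_1,z_2,z_3)=\frac{\gamma_1}{\gamma_2}(z_1,z_2,z_3)\cdot\frac{\alpha(\rho_2(z_1,z_2),h(z_2),\rho_1(z_2,z_3))}{\alpha(h(z_1),\rho_1(z_1,z_2),\rho_1(z_2,z_3))\alpha(\rho_2(z_1,z_2),\rho_2(z_2,z_3),h(z_3))}$.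 Its underlying $G$-bundle isomorphism is the one determined by $h$. *)

theory Defs
  imports "HOL-Analysis.Analysis"
begin

text \<open>The groups are written additively: the discrete group G is a type of
class group_add (not necessarily commutative), the abelian group A is a type of class
ab_group_add. Products in the paper become sums, quotients become differences.
Manifolds are modelled by (abstract) topological spaces; a surjective submersion is
modelled by a continuous surjection admitting continuous local sections.\<close>

definition locconst :: "'a topology \<Rightarrow> ('a \<Rightarrow> 'b) \<Rightarrow> bool" where
  "locconst T f \<longleftrightarrow> (\<forall>x\<in>topspace T. \<exists>U. openin T U \<and> x \<in> U \<and> (\<forall>y\<in>U. f y = f x))"

definition surj_subm :: "'x topology \<Rightarrow> 'y topology \<Rightarrow> ('y \<Rightarrow> 'x) \<Rightarrow> bool" where
  "surj_subm X Y u \<longleftrightarrow> continuous_map Y X u \<and> u ` topspace Y = topspace X \<and>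
     (\<forall>x\<in>topspace X. \<exists>U s. openin X U \<and> x \<in> U \<and> continuous_map (subtopology X U) Y s
        \<and> (\<forall>x'\<in>U. u (s x') = x'))"

definition fib2 :: "'y topology \<Rightarrow> ('y \<Rightarrow> 'x) \<Rightarrow> 'y \<Rightarrow> 'y \<Rightarrow> bool" where
  "fib2 Y u a b \<longleftrightarrow> a \<in> topspace Y \<and> b \<in> topspace Y \<and> u a = u b"

definition fib3 :: "'y topology \<Rightarrow> ('y \<Rightarrow> 'x) \<Rightarrow> 'y \<Rightarrow> 'y \<Rightarrow> 'y \<Rightarrow> bool" where
  "fib3 Y u a b c \<longleftrightarrow> fib2 Y u a b \<and> fib2 Y u b c"

definition fib4 :: "'y topology \<Rightarrow> ('y \<Rightarrow> 'x) \<Rightarrow> 'y \<Rightarrow> 'y \<Rightarrow> 'y \<Rightarrow> 'y \<Rightarrow> bool" where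
  "fib4 Y u a b c d \<longleftrightarrow> fib3 Y u a b c \<and> fib2 Y u c d"

definition fib2_top :: "'y topology \<Rightarrow> ('y \<Rightarrow> 'x) \<Rightarrow> ('y \<times> 'y) topology" where
  "fib2_top Y u = subtopology (prod_topology Y Y) {(a, b). fib2 Y u a b}"

definition fib3_top :: "'y topology \<Rightarrow> ('y \<Rightarrow> 'x) \<Rightarrow> ('y \<times> 'y \<times> 'y) topology" where
  "fib3_top Y u = subtopology (prod_topology Y (prod_topology Y Y)) {(a, b, c). fib3 Y u a b c}"

definition normalized_3cocycle :: "('g::group_add \<Rightarrow> 'g \<Rightarrow> 'g \<Rightarrow> 'a::ab_group_add) \<Rightarrow> bool" where
  "normalized_3cocycle \<alpha> \<longleftrightarrow>
     (\<forall>g1 g2 g3 g4. \<alpha> g2 g3 g4 - \<alpha> (g1 + g2) g3 g4 + \<alpha> g1 (g2 + g3) g4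
                    - \<alpha> g1 g2 (g3 + g4) + \<alpha> g1 g2 g3 = 0) \<and>
     (\<forall>g1 g2. \<alpha> 0 g1 g2 = 0 \<and> \<alpha> g1 0 g2 = 0 \<and> \<alpha> g1 g2 0 = 0)"

definition cech_1cocycle :: "'y topology \<Rightarrow> ('y \<Rightarrow> 'x) \<Rightarrow> ('y \<Rightarrow> 'y \<Rightarrow> 'g::group_add) \<Rightarrow> bool" where
  "cech_1cocycle Y u \<rho> \<longleftrightarrow> locconst (fib2_top Y u) (\<lambda>(a, b). \<rho> a b) \<and>
     (\<forall>y1 y2 y3. fib3 Y u y1 y2 y3 \<longrightarrow> \<rho> y1 y3 = \<rho> y1 y2 + \<rho> y2 y3)"

definition cech_d1 :: "('y \<Rightarrow> 'y \<Rightarrow> 'a::ab_group_add) \<Rightarrow> 'y \<Rightarrow> 'y \<Rightarrow> 'y \<Rightarrow> 'a" where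
  "cech_d1 c y1 y2 y3 = c y2 y3 - c y1 y3 + c y1 y2"

definition cech_d2 :: "('y \<Rightarrow> 'y \<Rightarrow> 'y \<Rightarrow> 'a::ab_group_add) \<Rightarrow> 'y \<Rightarrow> 'y \<Rightarrow> 'y \<Rightarrow> 'y \<Rightarrow> 'a" where
  "cech_d2 c y1 y2 y3 y4 = c y2 y3 y4 - c y1 y3 y4 + c y1 y2 y4 - c y1 y2 y3"

definition flat_bundle :: "('g::group_add \<Rightarrow> 'g \<Rightarrow> 'g \<Rightarrow> 'a::ab_group_add) \<Rightarrow> 'x topology \<Rightarrow>
    'y topology \<Rightarrow> ('y \<Rightarrow> 'x) \<Rightarrow> ('y \<Rightarrow> 'y \<Rightarrow> 'g) \<Rightarrow> ('y \<Rightarrow> 'y \<Rightarrow> 'y \<Rightarrow> 'a) \<Rightarrow> bool" where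
  "flat_bundle \<alpha> X Y u \<rho> \<gamma> \<longleftrightarrow> surj_subm X Y u \<and> cech_1cocycle Y u \<rho> \<and>
     locconst (fib3_top Y u) (\<lambda>(a, b, c). \<gamma> a b c) \<and>
     (\<forall>y1 y2 y3 y4. fib4 Y u y1 y2 y3 y4 \<longrightarrow>
        cech_d2 \<gamma> y1 y2 y3 y4 = \<alpha> (\<rho> y1 y2) (\<rho> y2 y3) (\<rho> y3 y4)) \<and>
     (\<forall>y1 y2. fib2 Y u y1 y2 \<longrightarrow> \<gamma> y1 y2 y2 = 0) \<and>
     (\<forall>y2 y3. fib2 Y u y2 y3 \<longrightarrow> \<gamma> y2 y2 y3 = 0)"

text \<open>1-morphism (Z, v1, v2, h, \<eta>) : (u1, \<rho>1, \<gamma>1) \<rightarrow> (u2, \<rho>2, \<gamma>2); pullbacks along v1, v2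
explicit. Fiber products of Z are taken over X via u1 \<circ> v1.\<close>
definition flat_1mor :: "('g::group_add \<Rightarrow> 'g \<Rightarrow> 'g \<Rightarrow> 'a::ab_group_add) \<Rightarrow> 'x topology \<Rightarrow>
    'y1 topology \<Rightarrow> ('y1 \<Rightarrow> 'x) \<Rightarrow> ('y1 \<Rightarrow> 'y1 \<Rightarrow> 'g) \<Rightarrow> ('y1 \<Rightarrow> 'y1 \<Rightarrow> 'y1 \<Rightarrow> 'a) \<Rightarrow>
    'y2 topology \<Rightarrow> ('y2 \<Rightarrow> 'x) \<Rightarrow> ('y2 \<Rightarrow> 'y2 \<Rightarrow> 'g) \<Rightarrow> ('y2 \<Rightarrow> 'y2 \<Rightarrow> 'y2 \<Rightarrow> 'a) \<Rightarrow>
    'z topology \<Rightarrow> ('z \<Rightarrow> 'y1) \<Rightarrow> ('z \<Rightarrow> 'y2) \<Rightarrow> ('z \<Rightarrow> 'g) \<Rightarrow> ('z \<Rightarrow> 'z \<Rightarrow> 'a) \<Rightarrow> bool" where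
  "flat_1mor \<alpha> X Y1 u1 \<rho>1 \<gamma>1 Y2 u2 \<rho>2 \<gamma>2 Z v1 v2 h \<eta> \<longleftrightarrow>
     continuous_map Z Y1 v1 \<and> continuous_map Z Y2 v2 \<and>
     (\<forall>z\<in>topspace Z. u1 (v1 z) = u2 (v2 z)) \<and>
     surj_subm X Z (\<lambda>z. u1 (v1 z)) \<and>
     locconst Z h \<and>
     locconst (fib2_top Z (\<lambda>z. u1 (v1 z))) (\<lambda>(a, b). \<eta> a b) \<and>
     (\<forall>z1 z2. fib2 Z (\<lambda>z. u1 (v1 z)) z1 z2 \<longrightarrow>
        \<rho>2 (v2 z1) (v2 z2) + h z2 = h z1 + \<rho>1 (v1 z1) (v1 z2)) \<and>
     (\<forall>z1 z2 z3. fib3 Z (\<lambda>z. u1 (v1 z)) z1 z2 z3 \<longrightarrow>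
        cech_d1 \<eta> z1 z2 z3 =
          (\<gamma>1 (v1 z1) (v1 z2) (v1 z3) - \<gamma>2 (v2 z1) (v2 z2) (v2 z3))
          + \<alpha> (\<rho>2 (v2 z1) (v2 z2)) (h z2) (\<rho>1 (v1 z2) (v1 z3))
          - \<alpha> (h z1) (\<rho>1 (v1 z1) (v1 z2)) (\<rho>1 (v1 z2) (v1 z3))
          - \<alpha> (\<rho>2 (v2 z1) (v2 z2)) (\<rho>2 (v2 z2) (v2 z3)) (h z3))"

end

theory Submission
  imports Defs
begin

(* The transformed cocycle is h\<gamma>1 = \<gamma>1 + gauge_cochain \<alpha> \<rho>1 \<rho>2 h, where gauge_cochain
   collects the three \<alpha>-terms of the 1-morphism equation; with this choice \<eta> = 0 solves that
   equation. That h\<gamma>1 is again a flat bundle amounts to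
   d(gauge_cochain) = \<rho>2\<^sup>*\<alpha> - \<rho>1\<^sup>*\<alpha>, and after substituting
   \<rho>2(y1,y2) = h(y1) + \<rho>1(y1,y2) - h(y2) the difference is a signed sum of four values of the
   group coboundary of \<alpha>, hence zero. For part (2), the 1-morphism equations for
   (Y, id, id, h, \<eta>) into h\<gamma>1 and for (Y, id, id, h, \<eta>') into \<gamma>2 differ exactly by
   d(\<eta> - \<eta>') = \<gamma>2 - h\<gamma>1, so \<eta>'' = \<eta> - \<eta>' and conversely \<eta>' = \<eta> - \<eta>''. *)

lemma locconst_compose:
  assumes "continuous_map S T g" "locconst T f"
  shows "locconst S (\<lambda>x. f (g x))"
  unfolding locconst_def
proof
  fix x assume x: "x \<in> topspace S"
  then have "g x \<in> topspace T"
    using assms(1) by (auto simp: continuous_map_def)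
  then obtain U where U: "openin T U" "g x \<in> U" "\<forall>y\<in>U. f y = f (g x)"
    using assms(2) unfolding locconst_def by blast
  let ?V = "{y \<in> topspace S. g y \<in> U}"
  have "openin S ?V"
    using assms(1) U(1) by (rule openin_continuous_map_preimage)
  moreover have "x \<in> ?V" "\<forall>y\<in>?V. f (g y) = f (g x)"
    using x U(2,3) by blast+
  ultimately show "\<exists>V. openin S V \<and> x \<in> V \<and> (\<forall>y\<in>V. f (g y) = f (g x))"
    by blast
qed

lemma locconst_factor:
  assumes "locconst T f"
    and "\<And>x y. \<lbrakk>x \<in> topspace T; y \<in> topspace T; f x = f y\<rbrakk> \<Longrightarrow> g x = g y"
  shows "locconst T g"
  unfolding locconst_def
proof
  fix x assume x: "x \<in> topspace T"
  then obtain U where U: "openin T U" "x \<in> U" "\<forall>y\<in>U. f y = f x"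
    using assms(1) unfolding locconst_def by blast
  moreover have "U \<subseteq> topspace T"
    using U(1) by (rule openin_subset)
  ultimately show "\<exists>U. openin T U \<and> x \<in> U \<and> (\<forall>y\<in>U. g y = g x)"
    using x assms(2) by blast
qed

lemma locconst_const: "locconst T (\<lambda>x. c)"
  unfolding locconst_def using openin_topspace by blast

lemma locconst_Pair:
  assumes "locconst T f" "locconst T g"
  shows "locconst T (\<lambda>x. (f x, g x))"
  unfolding locconst_def
proof
  fix x assume x: "x \<in> topspace T"
  obtain U where "openin T U" "x \<in> U" "\<forall>y\<in>U. f y = f x"
    using assms(1) x unfolding locconst_def by blast
  moreover obtain V where "openin T V" "x \<in> V" "\<forall>y\<in>V. g y = g x"
    using assms(2) x unfolding locconst_def by blast
  ultimately show "\<exists>W. openin T W \<and> x \<in> W \<and> (\<forall>y\<in>W. (f y, g y) = (f x, g x))"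
    by (intro exI[of _ "U \<inter> V"]) (blast intro: openin_Int)
qed

lemma continuous_map_fib2_fst: "continuous_map (fib2_top Y u) Y fst"
  unfolding fib2_top_def by (intro continuous_map_from_subtopology continuous_map_fst)

lemma continuous_map_fib2_snd: "continuous_map (fib2_top Y u) Y snd"
  unfolding fib2_top_def by (intro continuous_map_from_subtopology continuous_map_snd)

lemma continuous_map_fib3_face12:
  "continuous_map (fib3_top Y u) (fib2_top Y u) (\<lambda>(a, b, c). (a, b))"
proof -
  have "continuous_map (prod_topology Y (prod_topology Y Y)) (prod_topology Y Y)
      (\<lambda>p. (fst p, fst (snd p)))"
    by (intro continuous_map_pairedI continuous_map_fst
        continuous_map_compose[OF continuous_map_snd continuous_map_fst, unfolded o_def])
  then show ?thesis
    unfolding fib3_top_def fib2_top_def fib3_def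
    by (auto simp: continuous_map_in_subtopology continuous_map_from_subtopology case_prod_unfold)
qed

lemma continuous_map_fib3_face23:
  "continuous_map (fib3_top Y u) (fib2_top Y u) (\<lambda>(a, b, c). (b, c))"
proof -
  have "continuous_map (prod_topology Y (prod_topology Y Y)) (prod_topology Y Y) snd"
    by (rule continuous_map_snd)
  then show ?thesis
    unfolding fib3_top_def fib2_top_def fib3_def
    by (auto simp: continuous_map_in_subtopology continuous_map_from_subtopology case_prod_unfold)
qed

lemma locconst_fib2_fst:
  "locconst Y h \<Longrightarrow> locconst (fib2_top Y u) (\<lambda>(a, b). h a)"
  using locconst_compose[OF continuous_map_fib2_fst] by (simp add: case_prod_unfold)

lemma locconst_fib2_snd:
  "locconst Y h \<Longrightarrow> locconst (fib2_top Y u) (\<lambda>(a, b). h b)"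
  using locconst_compose[OF continuous_map_fib2_snd] by (simp add: case_prod_unfold)

lemma locconst_fib3_face12:
  "locconst (fib2_top Y u) (\<lambda>(a, b). r a b) \<Longrightarrow> locconst (fib3_top Y u) (\<lambda>(a, b, c). r a b)"
  using locconst_compose[OF continuous_map_fib3_face12, where f = "\<lambda>(a, b). r a b"]
  by (simp add: case_prod_unfold)

lemma locconst_fib3_face23:
  "locconst (fib2_top Y u) (\<lambda>(a, b). r a b) \<Longrightarrow> locconst (fib3_top Y u) (\<lambda>(a, b, c). r b c)"
  using locconst_compose[OF continuous_map_fib3_face23, where f = "\<lambda>(a, b). r a b"]
  by (simp add: case_prod_unfold)

lemma cech_1cocycle_diag:
  assumes "cech_1cocycle Y u \<rho>" "y \<in> topspace Y"
  shows "\<rho> y y = 0"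
proof -
  have "\<rho> y y = \<rho> y y + \<rho> y y"
    using assms unfolding cech_1cocycle_def fib3_def fib2_def by blast
  then show ?thesis by (metis add.left_cancel add.right_neutral)
qed

definition group_d3 :: "('g::group_add \<Rightarrow> 'g \<Rightarrow> 'g \<Rightarrow> 'a::ab_group_add) \<Rightarrow> 'g \<Rightarrow> 'g \<Rightarrow> 'g \<Rightarrow> 'g \<Rightarrow> 'a" where
  "group_d3 \<alpha> g1 g2 g3 g4 = \<alpha> g2 g3 g4 - \<alpha> (g1 + g2) g3 g4 + \<alpha> g1 (g2 + g3) g4
     - \<alpha> g1 g2 (g3 + g4) + \<alpha> g1 g2 g3"

lemma normalized_3cocycle_iff:
  "normalized_3cocycle \<alpha> \<longleftrightarrow> (\<forall>g1 g2 g3 g4. group_d3 \<alpha> g1 g2 g3 g4 = 0) \<and>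
     (\<forall>g1 g2. \<alpha> 0 g1 g2 = 0 \<and> \<alpha> g1 0 g2 = 0 \<and> \<alpha> g1 g2 0 = 0)"
  by (simp add: normalized_3cocycle_def group_d3_def)

definition gauge_cochain :: "('g::group_add \<Rightarrow> 'g \<Rightarrow> 'g \<Rightarrow> 'a::ab_group_add) \<Rightarrow>
    ('y \<Rightarrow> 'y \<Rightarrow> 'g) \<Rightarrow> ('y \<Rightarrow> 'y \<Rightarrow> 'g) \<Rightarrow> ('y \<Rightarrow> 'g) \<Rightarrow> 'y \<Rightarrow> 'y \<Rightarrow> 'y \<Rightarrow> 'a" where
  "gauge_cochain \<alpha> \<rho>1 \<rho>2 h y1 y2 y3 = \<alpha> (\<rho>2 y1 y2) (h y2) (\<rho>1 y2 y3)
     - \<alpha> (h y1) (\<rho>1 y1 y2) (\<rho>1 y2 y3) - \<alpha> (\<rho>2 y1 y2) (\<rho>2 y2 y3) (h y3)"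

lemma locconst_gauge_cochain:
  assumes "locconst (fib2_top Y u) (\<lambda>(a, b). \<rho>1 a b)" "locconst (fib2_top Y u) (\<lambda>(a, b). \<rho>2 a b)"
    and "locconst Y h"
  shows "locconst (fib3_top Y u) (\<lambda>(a, b, c). gauge_cochain \<alpha> \<rho>1 \<rho>2 h a b c)"
proof -
  have "locconst (fib3_top Y u) (\<lambda>p. ((\<lambda>(a, b, c). \<rho>1 a b) p, (\<lambda>(a, b, c). \<rho>1 b c) p,
      (\<lambda>(a, b, c). \<rho>2 a b) p, (\<lambda>(a, b, c). \<rho>2 b c) p,
      (\<lambda>(a, b, c). h a) p, (\<lambda>(a, b, c). h b) p, (\<lambda>(a, b, c). h c) p))"
    by (intro locconst_Pair locconst_fib3_face12 locconst_fib3_face23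
        locconst_fib2_fst locconst_fib2_snd assms)
  then show ?thesis
    by (rule locconst_factor) (clarsimp simp: gauge_cochain_def)
qed

lemma gauge_identity:
  assumes "x + h2 = h1 + a" "y + h3 = h2 + b" "z + h4 = h3 + c"
  shows "\<alpha> x y z - \<alpha> a b c
      - ((\<alpha> y h3 c - \<alpha> h2 b c - \<alpha> y z h4)
       - (\<alpha> (x + y) h3 c - \<alpha> h1 (a + b) c - \<alpha> (x + y) z h4)
       + (\<alpha> x h2 (b + c) - \<alpha> h1 a (b + c) - \<alpha> x (y + z) h4)
       - (\<alpha> x h2 b - \<alpha> h1 a b - \<alpha> x y h3))
    = group_d3 \<alpha> x y z h4 - group_d3 \<alpha> x y h3 c + group_d3 \<alpha> x h2 b c - group_d3 \<alpha> h1 a b c"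
  unfolding group_d3_def assms(1) assms(2,3)[symmetric] by (simp add: algebra_simps)

lemma cech_d2_gauge_cochain:
  assumes cocycle: "\<And>g1 g2 g3 g4. group_d3 \<alpha> g1 g2 g3 g4 = 0"
    and "\<rho>2 y1 y2 + h y2 = h y1 + \<rho>1 y1 y2" "\<rho>2 y2 y3 + h y3 = h y2 + \<rho>1 y2 y3"
      "\<rho>2 y3 y4 + h y4 = h y3 + \<rho>1 y3 y4"
    and "\<rho>1 y1 y3 = \<rho>1 y1 y2 + \<rho>1 y2 y3" "\<rho>1 y2 y4 = \<rho>1 y2 y3 + \<rho>1 y3 y4"
      "\<rho>2 y1 y3 = \<rho>2 y1 y2 + \<rho>2 y2 y3" "\<rho>2 y2 y4 = \<rho>2 y2 y3 + \<rho>2 y3 y4"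
  shows "cech_d2 (gauge_cochain \<alpha> \<rho>1 \<rho>2 h) y1 y2 y3 y4
    = \<alpha> (\<rho>2 y1 y2) (\<rho>2 y2 y3) (\<rho>2 y3 y4) - \<alpha> (\<rho>1 y1 y2) (\<rho>1 y2 y3) (\<rho>1 y3 y4)"
proof -
  have "\<alpha> (\<rho>2 y1 y2) (\<rho>2 y2 y3) (\<rho>2 y3 y4) - \<alpha> (\<rho>1 y1 y2) (\<rho>1 y2 y3) (\<rho>1 y3 y4)
      - cech_d2 (gauge_cochain \<alpha> \<rho>1 \<rho>2 h) y1 y2 y3 y4 = 0"
    using gauge_identity[OF assms(2-4), of \<alpha>]
    unfolding cech_d2_def gauge_cochain_def assms(5-8) cocycle by simp
  then show ?thesis
    by (simp only: right_minus_eq)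
qed

lemma gauge_cochain_degenerate:
  assumes "normalized_3cocycle \<alpha>" "\<rho>1 y y = 0" "\<rho>2 y y = 0"
  shows "gauge_cochain \<alpha> \<rho>1 \<rho>2 h x y y = 0" "gauge_cochain \<alpha> \<rho>1 \<rho>2 h y y z = 0"
  using assms by (simp_all add: normalized_3cocycle_def gauge_cochain_def)

lemma flat_bundle_gauge_transform:
  assumes "normalized_3cocycle \<alpha>" "cech_1cocycle Y u \<rho>2" "locconst Y h"
    and intertwines: "\<forall>y1 y2. fib2 Y u y1 y2 \<longrightarrow> \<rho>2 y1 y2 + h y2 = h y1 + \<rho>1 y1 y2"
    and "flat_bundle \<alpha> X Y u \<rho>1 \<gamma>1"
  shows "flat_bundle \<alpha> X Y u \<rho>2 (\<lambda>a b c. \<gamma>1 a b c + gauge_cochain \<alpha> \<rho>1 \<rho>2 h a b c)"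
proof -
  have \<rho>1: "cech_1cocycle Y u \<rho>1" and \<gamma>1_locconst: "locconst (fib3_top Y u) (\<lambda>(a, b, c). \<gamma>1 a b c)"
    and \<gamma>1_d2: "\<And>y1 y2 y3 y4. fib4 Y u y1 y2 y3 y4 \<Longrightarrow>
      cech_d2 \<gamma>1 y1 y2 y3 y4 = \<alpha> (\<rho>1 y1 y2) (\<rho>1 y2 y3) (\<rho>1 y3 y4)"
    and \<gamma>1_norm: "\<And>y1 y2. fib2 Y u y1 y2 \<Longrightarrow> \<gamma>1 y1 y2 y2 = 0 \<and> \<gamma>1 y1 y1 y2 = 0"
    and "surj_subm X Y u"
    using assms(5) unfolding flat_bundle_def by auto
  have "locconst (fib3_top Y u) (\<lambda>(a, b, c). gauge_cochain \<alpha> \<rho>1 \<rho>2 h a b c)"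
    using \<rho>1 assms(2,3) by (intro locconst_gauge_cochain) (simp_all add: cech_1cocycle_def)
  then have "locconst (fib3_top Y u) (\<lambda>(a, b, c). \<gamma>1 a b c + gauge_cochain \<alpha> \<rho>1 \<rho>2 h a b c)"
    by (rule locconst_factor[OF locconst_Pair[OF \<gamma>1_locconst]]) auto
  moreover have "cech_d2 (\<lambda>a b c. \<gamma>1 a b c + gauge_cochain \<alpha> \<rho>1 \<rho>2 h a b c) y1 y2 y3 y4
      = \<alpha> (\<rho>2 y1 y2) (\<rho>2 y2 y3) (\<rho>2 y3 y4)" if "fib4 Y u y1 y2 y3 y4" for y1 y2 y3 y4
  proof -
    have "fib2 Y u y1 y2" "fib2 Y u y2 y3" "fib2 Y u y3 y4" "fib3 Y u y1 y2 y3" "fib3 Y u y2 y3 y4"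
      using that by (auto simp: fib4_def fib3_def)
    then have gauge_d2: "cech_d2 (gauge_cochain \<alpha> \<rho>1 \<rho>2 h) y1 y2 y3 y4
        = \<alpha> (\<rho>2 y1 y2) (\<rho>2 y2 y3) (\<rho>2 y3 y4) - \<alpha> (\<rho>1 y1 y2) (\<rho>1 y2 y3) (\<rho>1 y3 y4)"
      using assms(1,2) \<rho>1 intertwines
      by (intro cech_d2_gauge_cochain) (auto simp: normalized_3cocycle_iff cech_1cocycle_def)
    have "cech_d2 (\<lambda>a b c. \<gamma>1 a b c + gauge_cochain \<alpha> \<rho>1 \<rho>2 h a b c) y1 y2 y3 y4
        = cech_d2 \<gamma>1 y1 y2 y3 y4 + cech_d2 (gauge_cochain \<alpha> \<rho>1 \<rho>2 h) y1 y2 y3 y4"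
      by (simp add: cech_d2_def algebra_simps)
    then show ?thesis
      unfolding \<gamma>1_d2[OF that] gauge_d2 by simp
  qed
  moreover have "gauge_cochain \<alpha> \<rho>1 \<rho>2 h x y y = 0" "gauge_cochain \<alpha> \<rho>1 \<rho>2 h y y z = 0"
    if "y \<in> topspace Y" for x y z
    using assms(1) cech_1cocycle_diag[OF \<rho>1 that] cech_1cocycle_diag[OF assms(2) that]
    by (rule gauge_cochain_degenerate)+
  ultimately show ?thesis
    using \<gamma>1_norm assms(2) \<open>surj_subm X Y u\<close> unfolding flat_bundle_def by (auto simp: fib2_def)
qed

lemma flat_1mor_id_iff:
  "flat_1mor \<alpha> X Y u \<rho>1 \<gamma>1 Y u \<rho>2 \<gamma>2 Y id id h \<eta> \<longleftrightarrow>
     surj_subm X Y u \<and> locconst Y h \<and> locconst (fib2_top Y u) (\<lambda>(a, b). \<eta> a b) \<and>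
     (\<forall>y1 y2. fib2 Y u y1 y2 \<longrightarrow> \<rho>2 y1 y2 + h y2 = h y1 + \<rho>1 y1 y2) \<and>
     (\<forall>y1 y2 y3. fib3 Y u y1 y2 y3 \<longrightarrow>
        cech_d1 \<eta> y1 y2 y3 = \<gamma>1 y1 y2 y3 - \<gamma>2 y1 y2 y3 + gauge_cochain \<alpha> \<rho>1 \<rho>2 h y1 y2 y3)"
  by (simp add: flat_1mor_def gauge_cochain_def add_diff_eq)

lemma flat_1mor_gauge_transform:
  assumes "surj_subm X Y u" "locconst Y h"
    and "\<forall>y1 y2. fib2 Y u y1 y2 \<longrightarrow> \<rho>2 y1 y2 + h y2 = h y1 + \<rho>1 y1 y2"
  shows "flat_1mor \<alpha> X Y u \<rho>1 \<gamma>1 Y u \<rho>2 (\<lambda>a b c. \<gamma>1 a b c + gauge_cochain \<alpha> \<rho>1 \<rho>2 h a b c)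
    Y id id h (\<lambda>_ _. 0)"
proof -
  have "locconst (fib2_top Y u) (\<lambda>(a, b). 0)"
    by (rule locconst_factor[OF locconst_const]) (simp add: case_prod_unfold)
  with assms show ?thesis
    unfolding flat_1mor_id_iff by (simp add: cech_d1_def)
qed

lemma cech_d1_diff:
  "cech_d1 (\<lambda>a b. f a b - g a b) y1 y2 y3 = cech_d1 f y1 y2 y3 - cech_d1 g y1 y2 y3"
  by (simp add: cech_d1_def algebra_simps)

lemma locconst_diff:
  assumes "locconst T (\<lambda>(a, b). f a b)" "locconst T (\<lambda>(a, b). g a b)"
  shows "locconst T (\<lambda>(a, b). f a b - g a b)"
  by (rule locconst_factor[OF locconst_Pair[OF assms]]) auto

lemma flat_1mor_id_iff_cohomologous:
  assumes "flat_1mor \<alpha> X Y u \<rho>1 \<gamma>1 Y u \<rho>2 h\<gamma>1 Y id id h \<eta>"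
  shows "(\<exists>\<eta>'. flat_1mor \<alpha> X Y u \<rho>1 \<gamma>1 Y u \<rho>2 \<gamma>2 Y id id h \<eta>') \<longleftrightarrow>
    (\<exists>\<eta>''. locconst (fib2_top Y u) (\<lambda>(a, b). \<eta>'' a b) \<and>
      (\<forall>y1 y2 y3. fib3 Y u y1 y2 y3 \<longrightarrow> \<gamma>2 y1 y2 y3 = h\<gamma>1 y1 y2 y3 + cech_d1 \<eta>'' y1 y2 y3))"
proof
  assume "\<exists>\<eta>'. flat_1mor \<alpha> X Y u \<rho>1 \<gamma>1 Y u \<rho>2 \<gamma>2 Y id id h \<eta>'"
  then obtain \<eta>' where "flat_1mor \<alpha> X Y u \<rho>1 \<gamma>1 Y u \<rho>2 \<gamma>2 Y id id h \<eta>'" ..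
  with assms show "\<exists>\<eta>''. locconst (fib2_top Y u) (\<lambda>(a, b). \<eta>'' a b) \<and>
      (\<forall>y1 y2 y3. fib3 Y u y1 y2 y3 \<longrightarrow> \<gamma>2 y1 y2 y3 = h\<gamma>1 y1 y2 y3 + cech_d1 \<eta>'' y1 y2 y3)"
    unfolding flat_1mor_id_iff
    by (intro exI[of _ "\<lambda>a b. \<eta> a b - \<eta>' a b"]) (auto simp: locconst_diff cech_d1_diff)
next
  assume "\<exists>\<eta>''. locconst (fib2_top Y u) (\<lambda>(a, b). \<eta>'' a b) \<and>
      (\<forall>y1 y2 y3. fib3 Y u y1 y2 y3 \<longrightarrow> \<gamma>2 y1 y2 y3 = h\<gamma>1 y1 y2 y3 + cech_d1 \<eta>'' y1 y2 y3)"
  then obtain \<eta>'' where "locconst (fib2_top Y u) (\<lambda>(a, b). \<eta>'' a b)"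
    and "\<forall>y1 y2 y3. fib3 Y u y1 y2 y3 \<longrightarrow> \<gamma>2 y1 y2 y3 = h\<gamma>1 y1 y2 y3 + cech_d1 \<eta>'' y1 y2 y3"
    by blast
  with assms show "\<exists>\<eta>'. flat_1mor \<alpha> X Y u \<rho>1 \<gamma>1 Y u \<rho>2 \<gamma>2 Y id id h \<eta>'"
    unfolding flat_1mor_id_iff
    by (intro exI[of _ "\<lambda>a b. \<eta> a b - \<eta>'' a b"]) (auto simp: locconst_diff cech_d1_diff)
qed

theorem mainTheorem8:
  fixes \<alpha> :: "'g::group_add \<Rightarrow> 'g \<Rightarrow> 'g \<Rightarrow> 'a::ab_group_add"
    and X :: "'x topology" and Y :: "'y topology" and u :: "'y \<Rightarrow> 'x"
    and \<rho>1 \<rho>2 :: "'y \<Rightarrow> 'y \<Rightarrow> 'g" and h :: "'y \<Rightarrow> 'g"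
    and \<gamma>1 :: "'y \<Rightarrow> 'y \<Rightarrow> 'y \<Rightarrow> 'a"
  assumes "normalized_3cocycle \<alpha>"
    and "surj_subm X Y u"
    and "cech_1cocycle Y u \<rho>1" and "cech_1cocycle Y u \<rho>2"
    and "locconst Y h"
    and "\<forall>y1 y2. fib2 Y u y1 y2 \<longrightarrow> \<rho>2 y1 y2 + h y2 = h y1 + \<rho>1 y1 y2"
    and "flat_bundle \<alpha> X Y u \<rho>1 \<gamma>1"
  shows "(\<exists>h\<gamma>1 \<eta>. flat_bundle \<alpha> X Y u \<rho>2 h\<gamma>1 \<and>
            flat_1mor \<alpha> X Y u \<rho>1 \<gamma>1 Y u \<rho>2 h\<gamma>1 Y id id h \<eta>)
       \<and> (\<forall>h\<gamma>1 \<eta>. flat_bundle \<alpha> X Y u \<rho>2 h\<gamma>1 \<and>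
            flat_1mor \<alpha> X Y u \<rho>1 \<gamma>1 Y u \<rho>2 h\<gamma>1 Y id id h \<eta> \<longrightarrow>
          (\<forall>\<gamma>2. flat_bundle \<alpha> X Y u \<rho>2 \<gamma>2 \<longrightarrow>
            ((\<exists>\<eta>'. flat_1mor \<alpha> X Y u \<rho>1 \<gamma>1 Y u \<rho>2 \<gamma>2 Y id id h \<eta>') \<longleftrightarrow>
             (\<exists>\<eta>''. locconst (fib2_top Y u) (\<lambda>(a, b). \<eta>'' a b) \<and>
                (\<forall>y1 y2 y3. fib3 Y u y1 y2 y3 \<longrightarrow>
                   \<gamma>2 y1 y2 y3 = h\<gamma>1 y1 y2 y3 + cech_d1 \<eta>'' y1 y2 y3)))))"
proof -
  let ?h\<gamma>1 = "\<lambda>a b c. \<gamma>1 a b c + gauge_cochain \<alpha> \<rho>1 \<rho>2 h a b c"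
  have "flat_bundle \<alpha> X Y u \<rho>2 ?h\<gamma>1"
    using assms(1,4-7) by (rule flat_bundle_gauge_transform)
  moreover have "flat_1mor \<alpha> X Y u \<rho>1 \<gamma>1 Y u \<rho>2 ?h\<gamma>1 Y id id h (\<lambda>_ _. 0)"
    using assms(2,5,6) by (rule flat_1mor_gauge_transform)
  ultimately show ?thesis
    using flat_1mor_id_iff_cohomologous by blast
qed

end
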